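(* Consider a trajectory of the no-slip billiard in a solid cylinder $\mathcal{B}\subset\mathbb{R}^n$ with axis vector $e$, the particle being subject to the constant force $-mge$. Then the sequence of longitudinal positions $h_i$ satisfies $$h_i=h_{i-1}+\mathbbm{1}^\dagger\Big(t_{i-1}\Lambda_{i-1}+\frac{t_{i-1}^2}{2}\Phi\Big),\qquad \Lambda_i=\mathcal{A}_i\big(\Lambda_{i-1}+t_{i-1}\Phi\big),$$ with initial conditions $\Lambda_0$ and $h_0$.
   Context: The particle is a ball of radius $r>0$ with rotationally symmetric mass distribution of total mass $m$ and second-moment matrix per unit mass $\lambda I$, $\lambda=(r\gamma)^2/2$, $\gamma>0$; $c=\frac{1-\gamma^2}{1+\gamma^2}$, $s=\frac{2\gamma}{1+\gamma^2}$; $(a\wedge b)x=(a\cdot x)b-(b\cdot x)a$. The solid cylinder is $\mathcal{B}=\overline{\mathcal{B}}\times\mathbb{R}e$ with $\overline{\mathcal{B}}\subset W:=e^\perp$ (the set of admissible centers); $\nu_a\in W$ is the inward unit normal at a regular boundary point $a$. A state is $(a,u,U)$, $u$ the center-of-mass velocity, $U\in\mathfrak{so}(n)$ the angular velocity matrix. Between collisions $U$ is constant and the center of mass moves with acceleration $-ge$; at a collision at $a$ the pre-collision $(u,U)$ is replaced by $C_a(u,U)=\big(cu-\tfrac{s}{\gamma}(u\cdot\nu_a)\nu_a+s\gamma rU\nu_a,\ \tfrac{s}{\gamma r}\nu_a\wedge u+U-\tfrac{s}{\gamma}\nu_a\wedge U\nu_a\big)$. For the $j$th collision ($j=0,1,\dots$)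 at $a_j$, let $(u_j,U_j)$ be the post-collision velocities, $t_j$ the time from the $j$th to the $(j+1)$st collision, $h_j=a_j\cdot e$, $\sigma_j=u_j\cdot e$, $w_j=\gamma rU_je\in W$, and $\Lambda_j=(\sigma_j,w_j)\in\mathbb{R}\oplus W\cong\mathbb{R}^n$. Let $\mathbbm{1}=(1,0)\in\mathbb{R}\oplus W$ and $\Phi=-g\mathbbm{1}$. For a boundary point $a$ let $W_a=\{w\in W:w\cdot\nu_a=0\}$, $\Pi_a$ the orthogonal projection onto $W_a$, and $\mathcal{A}(a)$ the linear map of $\mathbb{R}\oplus W$ with block matrix $\begin{pmatrix}c&-s\nu_a^\dagger\\-s\nu_a&-c\nu_a\nu_a^\dagger+\Pi_a\end{pmatrix}$; $\mathcal{A}_i=\mathcal{A}(a_i)$. *)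

theory Defs
  imports "HOL-Analysis.Analysis"
begin

definition Wspace :: "real^'n \<Rightarrow> (real^'n) set" where
  "Wspace e = {w. w \<bullet> e = 0}"

text \<open>(a wedge b) x = (a . x) b - (b . x) a, as a matrix.\<close>
definition wedge :: "real^'n \<Rightarrow> real^'n \<Rightarrow> real^'n^'n" where
  "wedge a b = (\<chi> i j. b $ i * a $ j - a $ i * b $ j)"

definition skew :: "real^'n^'n \<Rightarrow> bool" where
  "skew U \<longleftrightarrow> transpose U = - U"

definition cpar :: "real \<Rightarrow> real" where
  "cpar \<gamma> = (1 - \<gamma>\<^sup>2) / (1 + \<gamma>\<^sup>2)"

definition spar :: "real \<Rightarrow> real" where
  "spar \<gamma> = 2 * \<gamma> / (1 + \<gamma>\<^sup>2)"

definition collision_map ::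
  "real \<Rightarrow> real \<Rightarrow> real^'n \<Rightarrow> (real^'n) \<times> (real^'n^'n) \<Rightarrow> (real^'n) \<times> (real^'n^'n)" where
  "collision_map \<gamma> r \<nu> uU =
     (let u = fst uU; U = snd uU; c = cpar \<gamma>; s = spar \<gamma> in
      (c *\<^sub>R u - ((s / \<gamma>) * (u \<bullet> \<nu>)) *\<^sub>R \<nu> + (s * \<gamma> * r) *\<^sub>R (U *v \<nu>),
       (s / (\<gamma> * r)) *\<^sub>R wedge \<nu> u + U - (s / \<gamma>) *\<^sub>R wedge \<nu> (U *v \<nu>)))"

text \<open>Solid cylinder of admissible centers: Bbar + R e.\<close>
definition cylinder :: "(real^'n) set \<Rightarrow> real^'n \<Rightarrow> (real^'n) set" where
  "cylinder Bbar e = {x. x - (x \<bullet> e) *\<^sub>R e \<in> Bbar}"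

definition inward_unit_normal :: "real^'n \<Rightarrow> (real^'n) set \<Rightarrow> real^'n \<Rightarrow> real^'n \<Rightarrow> bool" where
  "inward_unit_normal e S a \<nu> \<longleftrightarrow>
     a \<in> frontier S \<and> norm \<nu> = 1 \<and> \<nu> \<in> Wspace e \<and>
     (\<exists>f \<epsilon>. \<epsilon> > 0 \<and> f a = 0 \<and> (f has_derivative (\<lambda>x. \<nu> \<bullet> x)) (at a) \<and>
        S \<inter> ball a \<epsilon> = {x \<in> ball a \<epsilon>. f x \<ge> (0::real)})"

text \<open>A trajectory of the no-slip billiard in the solid cylinder with axis e under
  constant acceleration -g e: collision points a j, post-collision velocities (u j, U j),
  inter-collision times t j, inward unit normals nu j at a j.\<close>
definition noslip_trajectory ::
  "real^'n \<Rightarrow> real \<Rightarrow> real \<Rightarrow> real \<Rightarrow> (real^'n) set \<Rightarrow>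
   (nat \<Rightarrow> real^'n) \<Rightarrow> (nat \<Rightarrow> real^'n) \<Rightarrow> (nat \<Rightarrow> real^'n^'n) \<Rightarrow>
   (nat \<Rightarrow> real) \<Rightarrow> (nat \<Rightarrow> real^'n) \<Rightarrow> bool" where
  "noslip_trajectory e g r \<gamma> Bbar a u U t \<nu> \<longleftrightarrow>
     (\<forall>j. inward_unit_normal e (cylinder Bbar e) (a j) (\<nu> j)
        \<and> skew (U j)
        \<and> t j > 0
        \<and> (\<forall>\<tau>\<in>{0<..<t j}.
              a j + \<tau> *\<^sub>R u j - (g * \<tau>\<^sup>2 / 2) *\<^sub>R e \<in> interior (cylinder Bbar e))
        \<and> a (Suc j) = a j + t j *\<^sub>R u j - (g * (t j)\<^sup>2 / 2) *\<^sub>R e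
        \<and> (u (Suc j), U (Suc j)) =
            collision_map \<gamma> r (\<nu> (Suc j)) (u j - (g * t j) *\<^sub>R e, U j))"

text \<open>R (+) W is represented as real \<times> (real^'n) (second component in W).\<close>
definition one_vec :: "real \<times> (real^'n)" where
  "one_vec = (1, 0)"

definition Lam :: "real^'n \<Rightarrow> real \<Rightarrow> real \<Rightarrow> real^'n \<Rightarrow> real^'n^'n \<Rightarrow> real \<times> (real^'n)" where
  "Lam e r \<gamma> u U = (u \<bullet> e, (\<gamma> * r) *\<^sub>R (U *v e))"

text \<open>Orthogonal projection onto W_a = {w in W. w . nu = 0} (e, nu orthonormal).\<close>
definition Pi_proj :: "real^'n \<Rightarrow> real^'n \<Rightarrow> real^'n \<Rightarrow> real^'n" where
  "Pi_proj e \<nu> w = w - (w \<bullet> \<nu>) *\<^sub>R \<nu> - (w \<bullet> e) *\<^sub>R e"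

definition Amap :: "real \<Rightarrow> real^'n \<Rightarrow> real^'n \<Rightarrow> real \<times> (real^'n) \<Rightarrow> real \<times> (real^'n)" where
  "Amap \<gamma> e \<nu> x =
     (cpar \<gamma> * fst x - spar \<gamma> * (\<nu> \<bullet> snd x),
      (- spar \<gamma> * fst x) *\<^sub>R \<nu> - (cpar \<gamma> * (\<nu> \<bullet> snd x)) *\<^sub>R \<nu> + Pi_proj e \<nu> (snd x))"

end

theory Submission
  imports Defs
begin

text \<open>Between collisions the axial velocity decreases by \<open>g t\<close> and the height is quadratic in
  time, which gives the recursion for \<open>h\<close> and the free-flight term \<open>\<Lambda> + t \<Phi>\<close>. At a
  collision, \<open>\<sigma> = u \<bullet> e\<close> and \<open>w = \<gamma> r U e\<close> transform linearly: skew-symmetry of \<open>U\<close>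
  gives \<open>U \<nu> \<bullet> e = - \<nu> \<bullet> U e\<close> and \<open>U e \<bullet> e = 0\<close>, and with \<open>c + 1 = s / \<gamma>\<close> the collision
  map becomes the block map \<open>A(a)\<close>.\<close>

lemma wedge_mult_vec: "wedge a b *v x = (a \<bullet> x) *\<^sub>R b - (b \<bullet> x) *\<^sub>R a"
  by (simp add: vec_eq_iff wedge_def matrix_vector_mult_def inner_vec_def
      algebra_simps sum_subtractf sum_distrib_left sum_distrib_right)

lemma skew_inner_mult_vec:
  assumes "skew V"
  shows "(V *v x) \<bullet> y = - (x \<bullet> (V *v y))"
proof -
  have "(V *v x) \<bullet> y = x \<bullet> (transpose V *v y)"
    by (metis dot_lmul_matrix inner_commute vector_transpose_matrix)
  also have "transpose V *v y = - (V *v y)"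
    using assms by (simp add: skew_def vec_eq_iff matrix_vector_mult_def sum_negf)
  finally show ?thesis
    by simp
qed

lemma skew_inner_mult_vec_self:
  assumes "skew V"
  shows "(V *v x) \<bullet> x = 0"
  using skew_inner_mult_vec[OF assms, of x x] by (simp add: inner_commute)

lemma cpar_add_one:
  assumes "\<gamma> > 0"
  shows "cpar \<gamma> + 1 = spar \<gamma> / \<gamma>"
proof -
  have "1 + \<gamma>\<^sup>2 > 0"
    by (simp add: add_pos_nonneg)
  then have "cpar \<gamma> + 1 = 2 / (1 + \<gamma>\<^sup>2)"
    by (simp add: cpar_def field_simps)
  also have "\<dots> = spar \<gamma> / \<gamma>"
    using assms by (simp add: spar_def)
  finally show ?thesis .
qed

lemma Lam_free_flight:
  assumes "e \<bullet> e = 1"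
  shows "Lam e r \<gamma> (u - (g * t) *\<^sub>R e) V = Lam e r \<gamma> u V + t *\<^sub>R ((- g) *\<^sub>R one_vec)"
  using assms by (simp add: Lam_def one_vec_def inner_diff_left)

lemma height_free_flight:
  assumes "e \<bullet> e = 1"
  shows "(a + t *\<^sub>R u - (g * t\<^sup>2 / 2) *\<^sub>R e) \<bullet> e
           = a \<bullet> e + fst (t *\<^sub>R Lam e r \<gamma> u V + (t\<^sup>2 / 2) *\<^sub>R ((- g) *\<^sub>R one_vec))"
  using assms by (simp add: Lam_def one_vec_def inner_diff_left inner_add_left)

lemma Lam_collision_map:
  assumes "skew V" and "\<nu> \<bullet> e = 0" and "\<gamma> > 0" and "r \<noteq> 0"
    and "(u', U') = collision_map \<gamma> r \<nu> (v, V)"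
  shows "Lam e r \<gamma> u' U' = Amap \<gamma> e \<nu> (Lam e r \<gamma> v V)"
proof -
  define w where "w = (\<gamma> * r) *\<^sub>R (V *v e)"
  have u': "u' = cpar \<gamma> *\<^sub>R v - ((spar \<gamma> / \<gamma>) * (v \<bullet> \<nu>)) *\<^sub>R \<nu> + (spar \<gamma> * \<gamma> * r) *\<^sub>R (V *v \<nu>)"
    and U': "U' = (spar \<gamma> / (\<gamma> * r)) *\<^sub>R wedge \<nu> v + V - (spar \<gamma> / \<gamma>) *\<^sub>R wedge \<nu> (V *v \<nu>)"
    using assms(5) by (simp_all add: collision_map_def Let_def)
  have normal_rot: "(V *v \<nu>) \<bullet> e = - (\<nu> \<bullet> (V *v e))"
    using skew_inner_mult_vec[OF assms(1)] .
  have axial: "u' \<bullet> e = cpar \<gamma> * (v \<bullet> e) - spar \<gamma> * (\<nu> \<bullet> w)"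
    using assms(2) normal_rot by (simp add: u' w_def inner_diff_left inner_add_left)
  have "(\<gamma> * r) *\<^sub>R (U' *v e) = (- spar \<gamma> * (v \<bullet> e)) *\<^sub>R \<nu> + w - ((spar \<gamma> / \<gamma>) * (\<nu> \<bullet> w)) *\<^sub>R \<nu>"
    using assms(2-4) normal_rot
    by (simp add: U' w_def wedge_mult_vec scaleR_matrix_vector_assoc[symmetric]
        algebra_simps inner_commute)
  also have "\<dots> = (- spar \<gamma> * (v \<bullet> e)) *\<^sub>R \<nu> - (cpar \<gamma> * (\<nu> \<bullet> w)) *\<^sub>R \<nu> + Pi_proj e \<nu> w"
    using skew_inner_mult_vec_self[OF assms(1)]
    by (simp add: Pi_proj_def w_def cpar_add_one[OF assms(3), symmetric] algebra_simps inner_commute)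
  finally show ?thesis
    by (simp add: Lam_def Amap_def axial w_def)
qed

theorem proposition5p1:
  fixes e :: "real^'n" and g r \<gamma> :: real and Bbar :: "(real^'n) set"
    and a u :: "nat \<Rightarrow> real^'n" and U :: "nat \<Rightarrow> real^'n^'n"
    and t :: "nat \<Rightarrow> real" and \<nu> :: "nat \<Rightarrow> real^'n"
  assumes "norm e = 1" and "r > 0" and "\<gamma> > 0" and "Bbar \<subseteq> Wspace e"
    and traj: "noslip_trajectory e g r \<gamma> Bbar a u U t \<nu>"
  defines "h \<equiv> \<lambda>j. a j \<bullet> e"
    and "\<Lambda> \<equiv> \<lambda>j. Lam e r \<gamma> (u j) (U j)"
    and "\<Phi> \<equiv> (- g) *\<^sub>R (one_vec :: real \<times> (real^'n))"
  shows "\<forall>i\<ge>1. h i = h (i - 1) + fst (t (i - 1) *\<^sub>R \<Lambda> (i - 1) + ((t (i - 1))\<^sup>2 / 2) *\<^sub>R \<Phi>)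
                 \<and> \<Lambda> i = Amap \<gamma> e (\<nu> i) (\<Lambda> (i - 1) + t (i - 1) *\<^sub>R \<Phi>)"
proof (intro allI impI)
  fix i :: nat
  assume "i \<ge> 1"
  then obtain j where i: "i = Suc j"
    by (cases i) auto
  have unit_axis: "e \<bullet> e = 1"
    using assms(1) by (simp add: dot_square_norm)
  have normal: "inward_unit_normal e (cylinder Bbar e) (a (Suc j)) (\<nu> (Suc j))"
    and "skew (U j)"
    and flight: "a (Suc j) = a j + t j *\<^sub>R u j - (g * (t j)\<^sup>2 / 2) *\<^sub>R e"
    and collision: "(u (Suc j), U (Suc j)) = collision_map \<gamma> r (\<nu> (Suc j)) (u j - (g * t j) *\<^sub>R e, U j)"
    using traj unfolding noslip_trajectory_def by blast+
  have "\<nu> (Suc j) \<bullet> e = 0"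
    using normal by (simp add: inward_unit_normal_def Wspace_def)
  then have "\<Lambda> (Suc j) = Amap \<gamma> e (\<nu> (Suc j)) (Lam e r \<gamma> (u j - (g * t j) *\<^sub>R e) (U j))"
    using Lam_collision_map[OF \<open>skew (U j)\<close> _ assms(3) _ collision] assms(2)
    by (simp add: \<Lambda>_def)
  then show "h i = h (i - 1) + fst (t (i - 1) *\<^sub>R \<Lambda> (i - 1) + ((t (i - 1))\<^sup>2 / 2) *\<^sub>R \<Phi>)
             \<and> \<Lambda> i = Amap \<gamma> e (\<nu> i) (\<Lambda> (i - 1) + t (i - 1) *\<^sub>R \<Phi>)"
    using height_free_flight[OF unit_axis] Lam_free_flight[OF unit_axis]
    by (simp add: i h_def \<Lambda>_def \<Phi>_def flight)
qed

end
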